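(* Let $L\subseteq Q$ be an extension of Lie algebras with $L$ semiprime. Then the following are equivalent: (i) $Q$ is an algebra of quotients of $L$; (ii) $Z(Q)=0$ and, for every $\mu\in A(Q)\setminus\{0\}$, there is an ideal $I$ of $L$ with $\mathrm{Ann}_L(I)=0$ such that $\mu\widetilde{I}\subseteq A_0$ and $0\neq \widetilde{I}\mu\subseteq A_0$, and moreover, if $\mu=\mathrm{ad}_q$ for some $q\in Q$, then also $\mu\widetilde{I}(L)\neq 0$ (i.e. there are $\alpha\in\widetilde I$ and $x\in L$ with $\mu(\alpha(x))\neq 0$).
   Context: All algebras are over a fixed commutative unital ring $\Phi$; associative algebras need not be unital. For a Lie algebra $Q$ and $x\in Q$, $\mathrm{ad}_x\colon Q\to Q$ is $y\mapsto[x,y]$, and $A(Q)$ is the associative subalgebra of $\mathrm{End}_\Phi(Q)$ generated by $\{\mathrm{ad}_x: x\in Q\}$. An extension of Lie algebras $L\subseteq Q$ means $L$ is a Lie subalgebra of $Q$. $A_Q(L)$ is the associative subalgebra of $A(Q)$ generated by $\{\mathrm{ad}_x:x\in L\}$ (operators on $Q$), and $A_0=\{\mu\in A(Q):\mu(L)\subseteq L\}$. For an ideal $I$ of $L$, $A_Q(I)$ is the subalgebra of $A(Q)$ generated by $\{\mathrm{ad}_x : x\in I\}$ and $\widetilde I$ denotes the two-sided ideal of $A_Q(L)$ generated by $\{\mathrm{ad}_x:x\in I\}$. For $X\subseteq L$, $\mathrm{Ann}_L(X)=\{a\in L: [a,x]=0\ \forall x\in X\}$ and $Z(L)=\mathrm{Ann}_L(L)$.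 A Lie algebra $L$ is semiprime if $[I,I]\neq0$ for every nonzero ideal $I$. $Q$ is an algebra of quotients of $L$ if for every nonzero $q\in Q$ there is an ideal $I$ of $L$ with $\mathrm{Ann}_L(I)=0$ and $0\neq[I,q]\subseteq L$. *)

theory Defs
  imports Main "HOL.Modules"
begin

text \<open>A Lie algebra over the commutative ring 'r is modelled on the whole type 'q:
  scale is the Phi-module structure, br the Lie bracket.\<close>

definition lie_algebra :: "('r::comm_ring_1 \<Rightarrow> 'q::ab_group_add \<Rightarrow> 'q) \<Rightarrow> ('q \<Rightarrow> 'q \<Rightarrow> 'q) \<Rightarrow> bool" where
  "lie_algebra scale br \<longleftrightarrow> module scale
    \<and> (\<forall>x y z. br (x + y) z = br x z + br y z)
    \<and> (\<forall>x y z. br x (y + z) = br x y + br x z)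
    \<and> (\<forall>c x y. br (scale c x) y = scale c (br x y))
    \<and> (\<forall>c x y. br x (scale c y) = scale c (br x y))
    \<and> (\<forall>x. br x x = 0)
    \<and> (\<forall>x y z. br x (br y z) + br y (br z x) + br z (br x y) = 0)"

definition submod :: "('r::comm_ring_1 \<Rightarrow> 'q::ab_group_add \<Rightarrow> 'q) \<Rightarrow> 'q set \<Rightarrow> bool" where
  "submod scale S \<longleftrightarrow> 0 \<in> S \<and> (\<forall>x\<in>S. \<forall>y\<in>S. x + y \<in> S) \<and> (\<forall>c. \<forall>x\<in>S. scale c x \<in> S)"

definition lie_subalgebra :: "('r::comm_ring_1 \<Rightarrow> 'q::ab_group_add \<Rightarrow> 'q) \<Rightarrow> ('q \<Rightarrow> 'q \<Rightarrow> 'q) \<Rightarrow> 'q set \<Rightarrow> bool" where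
  "lie_subalgebra scale br L \<longleftrightarrow> submod scale L \<and> (\<forall>x\<in>L. \<forall>y\<in>L. br x y \<in> L)"

definition lie_ideal :: "('r::comm_ring_1 \<Rightarrow> 'q::ab_group_add \<Rightarrow> 'q) \<Rightarrow> ('q \<Rightarrow> 'q \<Rightarrow> 'q) \<Rightarrow> 'q set \<Rightarrow> 'q set \<Rightarrow> bool" where
  "lie_ideal scale br L I \<longleftrightarrow> I \<subseteq> L \<and> submod scale I \<and> (\<forall>x\<in>L. \<forall>a\<in>I. br x a \<in> I)"

definition Ann :: "('q \<Rightarrow> 'q \<Rightarrow> 'q::zero) \<Rightarrow> 'q set \<Rightarrow> 'q set \<Rightarrow> 'q set" where
  "Ann br L X = {a \<in> L. \<forall>x\<in>X. br a x = 0}"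

definition center :: "('q \<Rightarrow> 'q \<Rightarrow> 'q::zero) \<Rightarrow> 'q set \<Rightarrow> 'q set" where
  "center br L = Ann br L L"

definition semiprime :: "('r::comm_ring_1 \<Rightarrow> 'q::ab_group_add \<Rightarrow> 'q) \<Rightarrow> ('q \<Rightarrow> 'q \<Rightarrow> 'q) \<Rightarrow> 'q set \<Rightarrow> bool" where
  "semiprime scale br L \<longleftrightarrow>
     (\<forall>I. lie_ideal scale br L I \<and> I \<noteq> {0} \<longrightarrow> (\<exists>a\<in>I. \<exists>b\<in>I. br a b \<noteq> 0))"

definition ad :: "('q \<Rightarrow> 'q \<Rightarrow> 'q) \<Rightarrow> 'q \<Rightarrow> 'q \<Rightarrow> 'q" where
  "ad br x = (\<lambda>y. br x y)"

inductive_set gen_alg :: "('r::comm_ring_1 \<Rightarrow> 'q::ab_group_add \<Rightarrow> 'q) \<Rightarrow> ('q \<Rightarrow> 'q) set \<Rightarrow> ('q \<Rightarrow> 'q) set"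
  for scale G where
  gen: "f \<in> G \<Longrightarrow> f \<in> gen_alg scale G"
| zero: "(\<lambda>_. 0) \<in> gen_alg scale G"
| add: "f \<in> gen_alg scale G \<Longrightarrow> g \<in> gen_alg scale G \<Longrightarrow> (\<lambda>v. f v + g v) \<in> gen_alg scale G"
| smult: "f \<in> gen_alg scale G \<Longrightarrow> (\<lambda>v. scale c (f v)) \<in> gen_alg scale G"
| comp: "f \<in> gen_alg scale G \<Longrightarrow> g \<in> gen_alg scale G \<Longrightarrow> f \<circ> g \<in> gen_alg scale G"

inductive_set gen_ideal :: "('r::comm_ring_1 \<Rightarrow> 'q::ab_group_add \<Rightarrow> 'q) \<Rightarrow> ('q \<Rightarrow> 'q) set \<Rightarrow> ('q \<Rightarrow> 'q) set \<Rightarrow> ('q \<Rightarrow> 'q) set"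
  for scale B G where
  gen: "f \<in> G \<Longrightarrow> f \<in> gen_ideal scale B G"
| zero: "(\<lambda>_. 0) \<in> gen_ideal scale B G"
| add: "f \<in> gen_ideal scale B G \<Longrightarrow> g \<in> gen_ideal scale B G \<Longrightarrow> (\<lambda>v. f v + g v) \<in> gen_ideal scale B G"
| smult: "f \<in> gen_ideal scale B G \<Longrightarrow> (\<lambda>v. scale c (f v)) \<in> gen_ideal scale B G"
| lmult: "b \<in> B \<Longrightarrow> f \<in> gen_ideal scale B G \<Longrightarrow> b \<circ> f \<in> gen_ideal scale B G"
| rmult: "b \<in> B \<Longrightarrow> f \<in> gen_ideal scale B G \<Longrightarrow> f \<circ> b \<in> gen_ideal scale B G"

definition AQ :: "('r::comm_ring_1 \<Rightarrow> 'q::ab_group_add \<Rightarrow> 'q) \<Rightarrow> ('q \<Rightarrow> 'q \<Rightarrow> 'q) \<Rightarrow> ('q \<Rightarrow> 'q) set" where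
  "AQ scale br = gen_alg scale {ad br x | x. True}"

definition AQL :: "('r::comm_ring_1 \<Rightarrow> 'q::ab_group_add \<Rightarrow> 'q) \<Rightarrow> ('q \<Rightarrow> 'q \<Rightarrow> 'q) \<Rightarrow> 'q set \<Rightarrow> ('q \<Rightarrow> 'q) set" where
  "AQL scale br L = gen_alg scale {ad br x | x. x \<in> L}"

definition A0 :: "('r::comm_ring_1 \<Rightarrow> 'q::ab_group_add \<Rightarrow> 'q) \<Rightarrow> ('q \<Rightarrow> 'q \<Rightarrow> 'q) \<Rightarrow> 'q set \<Rightarrow> ('q \<Rightarrow> 'q) set" where
  "A0 scale br L = {\<mu> \<in> AQ scale br. \<mu> ` L \<subseteq> L}"

definition Itilde :: "('r::comm_ring_1 \<Rightarrow> 'q::ab_group_add \<Rightarrow> 'q) \<Rightarrow> ('q \<Rightarrow> 'q \<Rightarrow> 'q) \<Rightarrow> 'q set \<Rightarrow> 'q set \<Rightarrow> ('q \<Rightarrow> 'q) set" where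
  "Itilde scale br L I = gen_ideal scale (AQL scale br L) {ad br x | x. x \<in> I}"

definition algebra_of_quotients :: "('r::comm_ring_1 \<Rightarrow> 'q::ab_group_add \<Rightarrow> 'q) \<Rightarrow> ('q \<Rightarrow> 'q \<Rightarrow> 'q) \<Rightarrow> 'q set \<Rightarrow> bool" where
  "algebra_of_quotients scale br L \<longleftrightarrow>
     (\<forall>q. q \<noteq> 0 \<longrightarrow> (\<exists>I. lie_ideal scale br L I \<and> Ann br L I = {0}
         \<and> (\<exists>x\<in>I. br x q \<noteq> 0) \<and> (\<forall>x\<in>I. br x q \<in> L)))"

end

(*
  Call an ideal of L essential if its annihilator in L is zero; semiprimeness makes essential
  ideals stable under finite intersections and under I |-> [I, I]. Write fractions J for the set
  of z in Q with [z, J] <= L.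

  (i) ==> (ii): in an algebra of quotients no nonzero element of Q is annihilated by an essential
  ideal, whence Z(Q) = 0. Each ad q is continuous for the essential ideals: given an essential J,
  let K be the intersection of J with an essential I0 such that q is in fractions I0; by the
  Leibniz rule I = [K, K] satisfies [q, I] <= J and [q, fractions J] <= fractions I. Continuity
  passes to sums, scalar multiples and composites, hence to every mu in A(Q). For J = L this
  gives an essential I with mu(I) <= L and mu(L) <= fractions I; as the operators in Itilde map
  L into I and fractions I into L, both mu Itilde and Itilde mu preserve L.

  (ii) ==> (i): for q /= 0 apply (ii) to mu = ad q, which is nonzero as Z(Q) = 0. The largest
  ideal of L on which ad q takes values in L contains Itilde(L), hence [I, I], so it is essential,
  and it does not centralise q because ad q (Itilde(L)) /= 0.
*)

theory Submission
  imports Defs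
begin

section \<open>Algebras and ideals of operators\<close>

context module
begin

lemma submod_iff_subspace: "submod scale S \<longleftrightarrow> subspace S"
  by (simp add: submod_def subspace_def)

lemma gen_alg_maps_into:
  assumes S: "subspace S" and G: "\<forall>g\<in>G. g ` S \<subseteq> S" and f: "f \<in> gen_alg scale G"
  shows "f ` S \<subseteq> S"
  using f
proof induction
  case (add f g)
  then show ?case using S by (auto intro: subspace_add)
qed (use S G in \<open>auto simp: subspace_0 subspace_scale\<close>)

lemma gen_alg_module_hom:
  assumes G: "\<forall>g\<in>G. module_hom scale scale g" and f: "f \<in> gen_alg scale G"
  shows "module_hom scale scale f"
  using f
proof induction
  case (comp f g)
  then show ?case using module_hom_compose by blast
qed (use G in \<open>auto simp: module_hom_iff module_axioms algebra_simps\<close>)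

lemma gen_ideal_maps_into:
  assumes T: "subspace T" and G: "\<forall>g\<in>G. g ` S \<subseteq> T"
    and BT: "\<forall>b\<in>B. b ` T \<subseteq> T" and BS: "\<forall>b\<in>B. b ` S \<subseteq> S"
    and f: "f \<in> gen_ideal scale B G"
  shows "f ` S \<subseteq> T"
  using f
proof induction
  case (lmult b f)
  then show ?case using BT by fastforce
next
  case (rmult b f)
  then show ?case using BS by fastforce
next
  case (add f g)
  then show ?case using T by (auto intro: subspace_add)
qed (use T G in \<open>auto simp: subspace_0 subspace_scale\<close>)

end

lemma gen_alg_mono: "G \<subseteq> H \<Longrightarrow> f \<in> gen_alg scale G \<Longrightarrow> f \<in> gen_alg scale H"
  by (erule gen_alg.induct) (auto intro: gen_alg.intros simp del: comp_apply)

lemma gen_ideal_subset_gen_alg: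
  "G \<subseteq> gen_alg scale H \<Longrightarrow> f \<in> gen_ideal scale (gen_alg scale H) G \<Longrightarrow> f \<in> gen_alg scale H"
  by (erule gen_ideal.induct) (auto intro: gen_alg.intros simp del: comp_apply)

section \<open>Lie algebras and their ideals\<close>

locale lie_alg =
  fixes scale :: "'r::comm_ring_1 \<Rightarrow> 'q::ab_group_add \<Rightarrow> 'q" and br :: "'q \<Rightarrow> 'q \<Rightarrow> 'q"
  assumes is_lie_algebra: "lie_algebra scale br"

sublocale lie_alg \<subseteq> module scale
  using is_lie_algebra unfolding lie_algebra_def by blast

context lie_alg
begin

lemma bracket_add_left: "br (x + y) z = br x z + br y z"
  and bracket_add_right: "br x (y + z) = br x y + br x z"
  and bracket_scale_left: "br (scale c x) y = scale c (br x y)"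
  and bracket_scale_right: "br x (scale c y) = scale c (br x y)"
  and bracket_self: "br x x = 0"
  and jacobi: "br x (br y z) + br y (br z x) + br z (br x y) = 0"
  using is_lie_algebra unfolding lie_algebra_def by auto

lemma module_hom_bracket_right: "module_hom scale scale (br x)"
  and module_hom_bracket_left: "module_hom scale scale (\<lambda>y. br y z)"
  by (simp_all add: module_hom_iff module_axioms bracket_add_left bracket_add_right
      bracket_scale_left bracket_scale_right)

lemma bracket_zero_left [simp]: "br 0 x = 0"
  using module_hom.zero[OF module_hom_bracket_left] .

lemma bracket_zero_right [simp]: "br x 0 = 0"
  using module_hom.zero[OF module_hom_bracket_right] .

lemma bracket_antisym: "br x y = - br y x"
proof -
  have "br x y + br y x = 0"
    using bracket_self[of "x + y"] unfolding bracket_add_left bracket_add_right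
    by (simp add: bracket_self add.commute)
  then show ?thesis by (simp add: eq_neg_iff_add_eq_0)
qed

lemma bracket_eq_0_commute: "br x y = 0 \<longleftrightarrow> br y x = 0"
  by (subst bracket_antisym) simp

lemma bracket_mem_commute: "subspace S \<Longrightarrow> br y x \<in> S \<Longrightarrow> br x y \<in> S"
  by (subst bracket_antisym) (rule subspace_neg)

lemma bracket_leibniz: "br q (br a b) = br (br q a) b + br a (br q b)"
proof -
  have "br q (br a b) + br a (br b q) + br b (br q a) = 0" by (rule jacobi)
  then show ?thesis
    by (simp add: bracket_antisym[of b q] bracket_antisym[of b "br q a"]
        module_hom.neg[OF module_hom_bracket_right] algebra_simps eq_neg_iff_add_eq_0)
qed

lemma ad_in_AQ: "ad br q \<in> AQ scale br"
  unfolding AQ_def by (blast intro: gen_alg.gen)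

lemma ad_eq_zero_iff_center: "ad br q = (\<lambda>_. 0) \<longleftrightarrow> q \<in> center br UNIV"
  by (auto simp: ad_def center_def Ann_def fun_eq_iff)

definition derived :: "'q set \<Rightarrow> 'q set" where
  "derived K = span {br a b |a b. a \<in> K \<and> b \<in> K}"

lemma derived_map_subset:
  assumes f: "module_hom scale scale f" and T: "subspace T"
    and brackets: "\<And>a b. a \<in> K \<Longrightarrow> b \<in> K \<Longrightarrow> f (br a b) \<in> T"
  shows "f ` derived K \<subseteq> T"
proof -
  have "derived K \<subseteq> {x. f x \<in> T}"
    unfolding derived_def
    using brackets module_hom.subspace_linear_preimage[OF f T] by (intro span_minimal) auto
  then show ?thesis by blast
qed

end

locale lie_extension = lie_alg scale br
  for scale :: "'r::comm_ring_1 \<Rightarrow> 'q::ab_group_add \<Rightarrow> 'q" and br +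
  fixes L :: "'q set"
  assumes is_subalgebra: "lie_subalgebra scale br L"
begin

lemma subspace_L: "subspace L"
  and bracket_closed: "x \<in> L \<Longrightarrow> y \<in> L \<Longrightarrow> br x y \<in> L"
  using is_subalgebra unfolding lie_subalgebra_def submod_iff_subspace by auto

lemma lie_ideal_L: "lie_ideal scale br L L"
  using subspace_L bracket_closed by (simp add: lie_ideal_def submod_iff_subspace)

lemma lie_ideal_subset: "lie_ideal scale br L I \<Longrightarrow> I \<subseteq> L"
  and lie_ideal_subspace: "lie_ideal scale br L I \<Longrightarrow> subspace I"
  and lie_ideal_bracket_left: "lie_ideal scale br L I \<Longrightarrow> x \<in> L \<Longrightarrow> a \<in> I \<Longrightarrow> br x a \<in> I"
  by (simp_all add: lie_ideal_def submod_iff_subspace)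

lemma lie_ideal_bracket_right: "lie_ideal scale br L I \<Longrightarrow> x \<in> L \<Longrightarrow> a \<in> I \<Longrightarrow> br a x \<in> I"
  by (metis bracket_mem_commute lie_ideal_bracket_left lie_ideal_subspace)

lemma lie_ideal_Int:
  "lie_ideal scale br L I \<Longrightarrow> lie_ideal scale br L J \<Longrightarrow> lie_ideal scale br L (I \<inter> J)"
  unfolding lie_ideal_def submod_def by blast

lemma lie_ideal_Ann:
  assumes I: "lie_ideal scale br L I"
  shows "lie_ideal scale br L (Ann br L I)"
  unfolding lie_ideal_def submod_iff_subspace
proof (intro conjI ballI subspaceI)
  fix y a assume y: "y \<in> L" and a: "a \<in> Ann br L I"
  have "br (br y a) x = 0" if x: "x \<in> I" for x
    using bracket_leibniz[of y a x] a x lie_ideal_bracket_left[OF I y x] by (simp add: Ann_def)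
  then show "br y a \<in> Ann br L I"
    using a y bracket_closed by (simp add: Ann_def)
qed (auto simp: Ann_def subspace_L subspace_0 subspace_add subspace_scale
    bracket_add_left bracket_scale_left)

definition essential :: "'q set \<Rightarrow> bool" where
  "essential I \<longleftrightarrow> lie_ideal scale br L I \<and> Ann br L I = {0}"

lemma essential_lie_ideal: "essential I \<Longrightarrow> lie_ideal scale br L I"
  by (simp add: essential_def)

lemma essential_ann_zero: "essential I \<Longrightarrow> a \<in> L \<Longrightarrow> (\<And>x. x \<in> I \<Longrightarrow> br a x = 0) \<Longrightarrow> a = 0"
  unfolding essential_def Ann_def by blast

lemma essentialI:
  assumes "lie_ideal scale br L I" and "\<And>a. a \<in> L \<Longrightarrow> \<forall>x\<in>I. br a x = 0 \<Longrightarrow> a = 0"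
  shows "essential I"
  using assms subspace_0[OF subspace_L] by (auto simp: essential_def Ann_def)

lemma derived_subset: "lie_ideal scale br L K \<Longrightarrow> derived K \<subseteq> K"
  unfolding derived_def
  by (intro span_minimal) (auto intro: lie_ideal_bracket_left lie_ideal_subspace dest: lie_ideal_subset)

lemma lie_ideal_derived:
  assumes K: "lie_ideal scale br L K"
  shows "lie_ideal scale br L (derived K)"
  unfolding lie_ideal_def submod_iff_subspace
proof (intro conjI ballI)
  show "derived K \<subseteq> L" using derived_subset[OF K] lie_ideal_subset[OF K] by blast
  show "subspace (derived K)" by (simp add: derived_def)
  fix y x assume y: "y \<in> L" and x: "x \<in> derived K"
  have "br y ` derived K \<subseteq> derived K"
  proof (rule derived_map_subset[OF module_hom_bracket_right])
    fix a b assume a: "a \<in> K" and b: "b \<in> K"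
    have "br (br y a) b \<in> derived K" "br a (br y b) \<in> derived K"
      using a b lie_ideal_bracket_left[OF K y] unfolding derived_def by (blast intro: span_base)+
    then show "br y (br a b) \<in> derived K"
      unfolding bracket_leibniz[of y a b] derived_def by (rule span_add)
  qed (simp add: derived_def)
  then show "br y x \<in> derived K" using x by blast
qed

lemma bracket_derived_subset:
  assumes K: "lie_ideal scale br L K" and z: "\<And>a. a \<in> K \<Longrightarrow> br z a \<in> L"
  shows "br z ` derived K \<subseteq> K"
proof (rule derived_map_subset[OF module_hom_bracket_right lie_ideal_subspace[OF K]])
  fix a b assume a: "a \<in> K" and b: "b \<in> K"
  have "br (br z a) b \<in> K" "br a (br z b) \<in> K"
    using a b z lie_ideal_bracket_left[OF K] lie_ideal_bracket_right[OF K] by blast+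
  then show "br z (br a b) \<in> K"
    unfolding bracket_leibniz[of z a b] by (rule subspace_add[OF lie_ideal_subspace[OF K]])
qed

definition fractions :: "'q set \<Rightarrow> 'q set" where
  "fractions I = {z. \<forall>x\<in>I. br z x \<in> L}"

lemma subspace_fractions: "subspace (fractions I)"
  by (rule subspaceI)
    (auto simp: fractions_def bracket_add_left bracket_scale_left subspace_L subspace_0
      subspace_add subspace_scale)

lemma fractions_antimono: "I \<subseteq> J \<Longrightarrow> fractions J \<subseteq> fractions I"
  unfolding fractions_def by blast

lemma L_subset_fractions: "I \<subseteq> L \<Longrightarrow> L \<subseteq> fractions I"
  unfolding fractions_def using bracket_closed by blast

lemma ad_in_AQL: "y \<in> L \<Longrightarrow> ad br y \<in> AQL scale br L"
  unfolding AQL_def by (blast intro: gen_alg.gen)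

lemma AQL_module_hom: "\<gamma> \<in> AQL scale br L \<Longrightarrow> module_hom scale scale \<gamma>"
  unfolding AQL_def by (rule gen_alg_module_hom) (auto simp: ad_def module_hom_bracket_right)

lemma AQL_maps_into:
  assumes "subspace S" and "\<And>y s. y \<in> L \<Longrightarrow> s \<in> S \<Longrightarrow> br y s \<in> S" and "\<gamma> \<in> AQL scale br L"
  shows "\<gamma> ` S \<subseteq> S"
  using assms unfolding AQL_def by (intro gen_alg_maps_into) (auto simp: ad_def)

lemma AQL_maps_ideal:
  assumes I: "lie_ideal scale br L I" and \<gamma>: "\<gamma> \<in> AQL scale br L"
  shows "\<gamma> ` I \<subseteq> I"
  by (rule AQL_maps_into[OF lie_ideal_subspace[OF I] lie_ideal_bracket_left[OF I] \<gamma>])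

lemma AQL_maps_fractions:
  assumes I: "lie_ideal scale br L I" and \<gamma>: "\<gamma> \<in> AQL scale br L"
  shows "\<gamma> ` fractions I \<subseteq> fractions I"
proof (rule AQL_maps_into[OF subspace_fractions _ \<gamma>])
  fix y z assume y: "y \<in> L" and z: "z \<in> fractions I"
  have "br (br y z) x \<in> L" if x: "x \<in> I" for x
  proof -
    have "br y (br z x) \<in> L" "br z (br y x) \<in> L"
      using x y z lie_ideal_bracket_left[OF I y x] bracket_closed by (auto simp: fractions_def)
    then have "br y (br z x) - br z (br y x) \<in> L" by (rule subspace_diff[OF subspace_L])
    then show ?thesis by (simp add: bracket_leibniz[of y z x])
  qed
  then show "br y z \<in> fractions I" by (simp add: fractions_def)
qed

lemma ad_in_Itilde: "x \<in> I \<Longrightarrow> ad br x \<in> Itilde scale br L I"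
  unfolding Itilde_def by (blast intro: gen_ideal.gen)

lemma AQL_comp_Itilde: "\<gamma> \<in> AQL scale br L \<Longrightarrow> \<alpha> \<in> Itilde scale br L I \<Longrightarrow> \<gamma> \<circ> \<alpha> \<in> Itilde scale br L I"
  unfolding Itilde_def by (rule gen_ideal.lmult)

lemma Itilde_subset_AQ:
  assumes I: "lie_ideal scale br L I" and \<alpha>: "\<alpha> \<in> Itilde scale br L I"
  shows "\<alpha> \<in> AQ scale br"
proof -
  have "{ad br x |x. x \<in> I} \<subseteq> AQL scale br L"
    using ad_in_AQL lie_ideal_subset[OF I] by blast
  then have "\<alpha> \<in> AQL scale br L"
    using \<alpha> gen_ideal_subset_gen_alg unfolding Itilde_def AQL_def by blast
  then show ?thesis
    unfolding AQL_def AQ_def by (rule gen_alg_mono[rotated]) blast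
qed

lemma Itilde_maps_L:
  assumes I: "lie_ideal scale br L I" and \<alpha>: "\<alpha> \<in> Itilde scale br L I"
  shows "\<alpha> ` L \<subseteq> I"
proof (rule gen_ideal_maps_into[OF lie_ideal_subspace[OF I]])
  show "\<forall>g\<in>{ad br x |x. x \<in> I}. g ` L \<subseteq> I"
    using lie_ideal_bracket_right[OF I] by (auto simp: ad_def)
qed (use \<alpha> AQL_maps_ideal[OF I] AQL_maps_ideal[OF lie_ideal_L] in \<open>auto simp: Itilde_def\<close>)

lemma Itilde_maps_fractions:
  assumes I: "lie_ideal scale br L I" and \<alpha>: "\<alpha> \<in> Itilde scale br L I"
  shows "\<alpha> ` fractions I \<subseteq> L"
proof (rule gen_ideal_maps_into[OF subspace_L])
  show "\<forall>g\<in>{ad br x |x. x \<in> I}. g ` fractions I \<subseteq> L"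
    using bracket_mem_commute[OF subspace_L] by (auto simp: ad_def fractions_def)
qed (use \<alpha> AQL_maps_fractions[OF I] AQL_maps_ideal[OF lie_ideal_L] in \<open>auto simp: Itilde_def\<close>)

lemma comp_Itilde_in_A0:
  assumes I: "lie_ideal scale br L I" and \<mu>: "\<mu> \<in> AQ scale br" and \<mu>I: "\<mu> ` I \<subseteq> L"
    and \<alpha>: "\<alpha> \<in> Itilde scale br L I"
  shows "\<mu> \<circ> \<alpha> \<in> A0 scale br L"
  unfolding A0_def
proof (intro CollectI conjI)
  show "\<mu> \<circ> \<alpha> \<in> AQ scale br"
    using \<mu> Itilde_subset_AQ[OF I \<alpha>] unfolding AQ_def by (rule gen_alg.comp)
  show "(\<mu> \<circ> \<alpha>) ` L \<subseteq> L"
    using Itilde_maps_L[OF I \<alpha>] \<mu>I unfolding image_comp[symmetric] by blast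
qed

lemma Itilde_comp_in_A0:
  assumes I: "lie_ideal scale br L I" and \<mu>: "\<mu> \<in> AQ scale br" and \<mu>L: "\<mu> ` L \<subseteq> fractions I"
    and \<alpha>: "\<alpha> \<in> Itilde scale br L I"
  shows "\<alpha> \<circ> \<mu> \<in> A0 scale br L"
  unfolding A0_def
proof (intro CollectI conjI)
  show "\<alpha> \<circ> \<mu> \<in> AQ scale br"
    using Itilde_subset_AQ[OF I \<alpha>] \<mu> unfolding AQ_def by (rule gen_alg.comp)
  show "(\<alpha> \<circ> \<mu>) ` L \<subseteq> L"
    using Itilde_maps_fractions[OF I \<alpha>] \<mu>L unfolding image_comp[symmetric] by blast
qed

text \<open>The largest ideal of L on which ad q takes values in L.\<close>
definition den_ideal :: "'q \<Rightarrow> 'q set" where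
  "den_ideal q = {x \<in> L. \<forall>\<gamma> \<in> insert id (AQL scale br L). br (\<gamma> x) q \<in> L}"

lemma lie_ideal_den_ideal: "lie_ideal scale br L (den_ideal q)"
proof -
  have hom: "module_hom scale scale \<gamma>" if "\<gamma> \<in> insert id (AQL scale br L)" for \<gamma>
    using that AQL_module_hom module_hom_id by auto
  have comp_ad: "\<gamma> \<circ> ad br y \<in> AQL scale br L" if "\<gamma> \<in> insert id (AQL scale br L)" "y \<in> L" for \<gamma> y
    using that ad_in_AQL unfolding AQL_def by (auto intro: gen_alg.comp simp del: comp_apply)
  show ?thesis
    unfolding lie_ideal_def submod_iff_subspace
  proof (intro conjI ballI subspaceI)
    fix y x assume y: "y \<in> L" and x: "x \<in> den_ideal q"
    have yx: "br ((\<gamma> \<circ> ad br y) x) q \<in> L" if "\<gamma> \<in> insert id (AQL scale br L)" for \<gamma>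
      using x comp_ad[OF that y] unfolding den_ideal_def by blast
    show "br y x \<in> den_ideal q"
      using yx yx[of id] x y bracket_closed by (auto simp: den_ideal_def ad_def)
  qed (auto simp: den_ideal_def subspace_L subspace_0 subspace_add subspace_scale
      module_hom.zero[OF hom] module_hom.add[OF hom] module_hom.scale[OF hom]
      bracket_add_left bracket_scale_left)
qed

lemma Itilde_maps_den_ideal:
  assumes I: "lie_ideal scale br L I" and q: "\<forall>\<alpha> \<in> Itilde scale br L I. ad br q \<circ> \<alpha> \<in> A0 scale br L"
    and \<alpha>: "\<alpha> \<in> Itilde scale br L I"
  shows "\<alpha> ` L \<subseteq> den_ideal q"
proof
  fix x assume "x \<in> \<alpha> ` L"
  then obtain l where l: "l \<in> L" and x: "x = \<alpha> l" by blast
  have "br (\<gamma> (\<alpha> l)) q \<in> L" if "\<gamma> \<in> insert id (AQL scale br L)" for \<gamma>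
  proof -
    have "\<gamma> \<circ> \<alpha> \<in> Itilde scale br L I" using that \<alpha> AQL_comp_Itilde by auto
    then have "br q (\<gamma> (\<alpha> l)) \<in> L" using q l unfolding A0_def ad_def by fastforce
    then show ?thesis by (rule bracket_mem_commute[OF subspace_L])
  qed
  moreover have "\<alpha> l \<in> L" using l Itilde_maps_L[OF I \<alpha>] lie_ideal_subset[OF I] by blast
  ultimately show "x \<in> den_ideal q" unfolding den_ideal_def x by blast
qed

text \<open>Continuity of \<mu> for the filter of essential ideals, both on the ideals themselves and on
  the modules of fractions.\<close>
definition ess_continuous :: "('q \<Rightarrow> 'q) \<Rightarrow> bool" where
  "ess_continuous \<mu> \<longleftrightarrow> (\<forall>J. essential J \<longrightarrow>
     (\<exists>I. essential I \<and> \<mu> ` I \<subseteq> J \<and> \<mu> ` fractions J \<subseteq> fractions I))"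

definition quotient_condition :: "('q \<Rightarrow> 'q) \<Rightarrow> 'q set \<Rightarrow> bool" where
  "quotient_condition \<mu> I \<longleftrightarrow>
     (\<forall>\<alpha> \<in> Itilde scale br L I. \<mu> \<circ> \<alpha> \<in> A0 scale br L)
     \<and> (\<forall>\<alpha> \<in> Itilde scale br L I. \<alpha> \<circ> \<mu> \<in> A0 scale br L)
     \<and> (\<exists>\<alpha> \<in> Itilde scale br L I. \<alpha> \<circ> \<mu> \<noteq> (\<lambda>_. 0))
     \<and> ((\<exists>q. \<mu> = ad br q) \<longrightarrow> (\<exists>\<alpha> \<in> Itilde scale br L I. \<exists>x \<in> L. \<mu> (\<alpha> x) \<noteq> 0))"

end

section \<open>Essential ideals of a semiprime Lie algebra\<close>

locale semiprime_extension = lie_extension scale br L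
  for scale :: "'r::comm_ring_1 \<Rightarrow> 'q::ab_group_add \<Rightarrow> 'q" and br L +
  assumes is_semiprime: "semiprime scale br L"
begin

lemma abelian_ideal_eq_zero:
  "lie_ideal scale br L N \<Longrightarrow> (\<And>a b. a \<in> N \<Longrightarrow> b \<in> N \<Longrightarrow> br a b = 0) \<Longrightarrow> N = {0}"
  using is_semiprime unfolding semiprime_def by blast

lemma ideal_Int_Ann: "lie_ideal scale br L K \<Longrightarrow> K \<inter> Ann br L K = {0}"
  by (rule abelian_ideal_eq_zero[OF lie_ideal_Int[OF _ lie_ideal_Ann]]) (auto simp: Ann_def)

lemma essential_L: "essential L"
proof -
  have "Ann br L L \<subseteq> L" by (auto simp: Ann_def)
  then show ?thesis
    using ideal_Int_Ann[OF lie_ideal_L] lie_ideal_L by (simp add: essential_def Int_absorb1)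
qed

lemma essential_Int:
  assumes I: "essential I" and J: "essential J"
  shows "essential (I \<inter> J)"
proof -
  have IJ: "lie_ideal scale br L (I \<inter> J)"
    using I J by (simp add: lie_ideal_Int essential_lie_ideal)
  let ?A = "Ann br L (I \<inter> J)"
  have A: "lie_ideal scale br L ?A" by (rule lie_ideal_Ann[OF IJ])
  show ?thesis
  proof (rule essentialI[OF IJ])
    fix a assume a: "a \<in> L" and "\<forall>x\<in>I \<inter> J. br a x = 0"
    then have aA: "a \<in> ?A" by (simp add: Ann_def)
    show "a = 0"
    proof (rule essential_ann_zero[OF I a])
      fix x assume x: "x \<in> I"
      have xL: "x \<in> L" using x lie_ideal_subset[OF essential_lie_ideal[OF I]] by blast
      have wI: "br a x \<in> I" by (rule lie_ideal_bracket_left[OF essential_lie_ideal[OF I] a x])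
      have wA: "br a x \<in> ?A" by (rule lie_ideal_bracket_right[OF A xL aA])
      have wL: "br a x \<in> L" using wA by (simp add: Ann_def)
      show "br a x = 0"
      proof (rule essential_ann_zero[OF J wL])
        fix y assume y: "y \<in> J"
        have yL: "y \<in> L" using y lie_ideal_subset[OF essential_lie_ideal[OF J]] by blast
        have "br (br a x) y \<in> (I \<inter> J) \<inter> ?A"
          using lie_ideal_bracket_right[OF essential_lie_ideal[OF I] yL wI]
            lie_ideal_bracket_left[OF essential_lie_ideal[OF J] wL y]
            lie_ideal_bracket_right[OF A yL wA] by blast
        then show "br (br a x) y = 0" using ideal_Int_Ann[OF IJ] by blast
      qed
    qed
  qed
qed

lemma essential_derived:
  assumes K: "essential K"
  shows "essential (derived K)"
proof -
  have Ki: "lie_ideal scale br L K" by (rule essential_lie_ideal[OF K])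
  have D: "lie_ideal scale br L (derived K)" by (rule lie_ideal_derived[OF Ki])
  let ?A = "Ann br L (derived K)"
  have A: "lie_ideal scale br L ?A" by (rule lie_ideal_Ann[OF D])
  have N: "lie_ideal scale br L (?A \<inter> K)" by (rule lie_ideal_Int[OF A Ki])
  have "?A \<inter> K = {0}"
  proof (rule abelian_ideal_eq_zero[OF N])
    fix n1 n2 assume n1: "n1 \<in> ?A \<inter> K" and n2: "n2 \<in> ?A \<inter> K"
    have "br n1 n2 \<in> derived K"
      using n1 n2 unfolding derived_def by (blast intro: span_base)
    then have "br n3 (br n1 n2) = 0" if "n3 \<in> ?A \<inter> K" for n3
      using that by (simp add: Ann_def)
    moreover have "br n1 n2 \<in> ?A \<inter> K"
      using lie_ideal_bracket_right[OF N _ n1] n2 lie_ideal_subset[OF N] by blast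
    ultimately have "br n1 n2 \<in> (?A \<inter> K) \<inter> Ann br L (?A \<inter> K)"
      by (auto simp: Ann_def bracket_eq_0_commute)
    then show "br n1 n2 = 0" using ideal_Int_Ann[OF N] by blast
  qed
  show ?thesis
  proof (rule essentialI[OF D])
    fix a assume a: "a \<in> L" and "\<forall>x\<in>derived K. br a x = 0"
    then have aA: "a \<in> ?A" by (simp add: Ann_def)
    show "a = 0"
    proof (rule essential_ann_zero[OF K a])
      fix k assume k: "k \<in> K"
      have "br a k \<in> ?A \<inter> K"
        using lie_ideal_bracket_right[OF A _ aA] lie_ideal_bracket_left[OF Ki a k]
          k lie_ideal_subset[OF Ki] by blast
      then show "br a k = 0" using \<open>?A \<inter> K = {0}\<close> by blast
    qed
  qed
qed

lemma essential_ann_brackets: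
  assumes K: "essential K" and a: "a \<in> L"
    and brackets: "\<And>k1 k2. k1 \<in> K \<Longrightarrow> k2 \<in> K \<Longrightarrow> br a (br k1 k2) = 0"
  shows "a = 0"
proof (rule essential_ann_zero[OF essential_derived[OF K] a])
  have "br a ` derived K \<subseteq> {0}"
    by (rule derived_map_subset[OF module_hom_bracket_right subspace_single_0]) (simp add: brackets)
  then show "br a x = 0" if "x \<in> derived K" for x
    using that by blast
qed

lemma ess_continuous_zero: "ess_continuous (\<lambda>_. 0)"
  unfolding ess_continuous_def
proof (intro allI impI exI conjI)
  fix J assume J: "essential J"
  then show "essential J" .
  show "(\<lambda>_. 0) ` J \<subseteq> J"
    using subspace_0[OF lie_ideal_subspace[OF essential_lie_ideal[OF J]]] by blast
  show "(\<lambda>_. 0) ` fractions J \<subseteq> fractions J"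
    using subspace_0[OF subspace_fractions] by blast
qed

lemma ess_continuous_add:
  assumes f: "ess_continuous f" and g: "ess_continuous g"
  shows "ess_continuous (\<lambda>v. f v + g v)"
  unfolding ess_continuous_def
proof (intro allI impI)
  fix J assume J: "essential J"
  obtain I1 where I1: "essential I1" "f ` I1 \<subseteq> J" "f ` fractions J \<subseteq> fractions I1"
    using f J unfolding ess_continuous_def by blast
  obtain I2 where I2: "essential I2" "g ` I2 \<subseteq> J" "g ` fractions J \<subseteq> fractions I2"
    using g J unfolding ess_continuous_def by blast
  have "(\<lambda>v. f v + g v) ` (I1 \<inter> I2) \<subseteq> J"
    using I1(2) I2(2) by (auto intro!: subspace_add[OF lie_ideal_subspace[OF essential_lie_ideal[OF J]]])
  moreover have "(\<lambda>v. f v + g v) ` fractions J \<subseteq> fractions (I1 \<inter> I2)"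
    using I1(3) I2(3) fractions_antimono[of "I1 \<inter> I2" I1] fractions_antimono[of "I1 \<inter> I2" I2]
    by (auto intro!: subspace_add[OF subspace_fractions])
  ultimately show "\<exists>I. essential I \<and> (\<lambda>v. f v + g v) ` I \<subseteq> J
      \<and> (\<lambda>v. f v + g v) ` fractions J \<subseteq> fractions I"
    using essential_Int[OF I1(1) I2(1)] by blast
qed

lemma ess_continuous_scale:
  assumes f: "ess_continuous f"
  shows "ess_continuous (\<lambda>v. scale c (f v))"
  unfolding ess_continuous_def
proof (intro allI impI)
  fix J assume J: "essential J"
  obtain I where I: "essential I" "f ` I \<subseteq> J" "f ` fractions J \<subseteq> fractions I"
    using f J unfolding ess_continuous_def by blast
  have "(\<lambda>v. scale c (f v)) ` I \<subseteq> J"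
    using I(2) by (auto intro!: subspace_scale[OF lie_ideal_subspace[OF essential_lie_ideal[OF J]]])
  moreover have "(\<lambda>v. scale c (f v)) ` fractions J \<subseteq> fractions I"
    using I(3) by (auto intro!: subspace_scale[OF subspace_fractions])
  ultimately show "\<exists>I. essential I \<and> (\<lambda>v. scale c (f v)) ` I \<subseteq> J
      \<and> (\<lambda>v. scale c (f v)) ` fractions J \<subseteq> fractions I"
    using I(1) by blast
qed

lemma ess_continuous_comp:
  assumes f: "ess_continuous f" and g: "ess_continuous g"
  shows "ess_continuous (f \<circ> g)"
  unfolding ess_continuous_def
proof (intro allI impI)
  fix J assume J: "essential J"
  obtain I1 where I1: "essential I1" "f ` I1 \<subseteq> J"
    using f J unfolding ess_continuous_def by blast
  obtain I2 where I2: "essential I2" "g ` I2 \<subseteq> I1"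
    using g I1(1) unfolding ess_continuous_def by blast
  obtain I3 where I3: "essential I3" "g ` fractions J \<subseteq> fractions I3"
    using g J unfolding ess_continuous_def by blast
  obtain I4 where I4: "essential I4" "f ` fractions I3 \<subseteq> fractions I4"
    using f I3(1) unfolding ess_continuous_def by blast
  have "(f \<circ> g) ` (I2 \<inter> I4) \<subseteq> J" using I1(2) I2(2) by auto
  moreover have "(f \<circ> g) ` fractions J \<subseteq> fractions (I2 \<inter> I4)"
    using I3(2) I4(2) fractions_antimono[of "I2 \<inter> I4" I4] by auto
  ultimately show "\<exists>I. essential I \<and> (f \<circ> g) ` I \<subseteq> J \<and> (f \<circ> g) ` fractions J \<subseteq> fractions I"
    using essential_Int[OF I2(1) I4(1)] by blast
qed

lemma ex_denominator_ideal:
  assumes I: "essential I" and cond: "quotient_condition (ad br q) I"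
  shows "\<exists>J. essential J \<and> (\<exists>y\<in>J. br y q \<noteq> 0) \<and> (\<forall>y\<in>J. br y q \<in> L)"
proof (intro exI conjI)
  have Ii: "lie_ideal scale br L I" by (rule essential_lie_ideal[OF I])
  have q: "\<forall>\<alpha> \<in> Itilde scale br L I. ad br q \<circ> \<alpha> \<in> A0 scale br L"
    using cond by (simp add: quotient_condition_def)
  obtain \<alpha> x where \<alpha>: "\<alpha> \<in> Itilde scale br L I" and x: "x \<in> L" and nonzero: "br q (\<alpha> x) \<noteq> 0"
    using cond by (auto simp: quotient_condition_def ad_def)
  show "essential (den_ideal q)"
  proof (rule essentialI[OF lie_ideal_den_ideal])
    fix a assume a: "a \<in> L" and "\<forall>y\<in>den_ideal q. br a y = 0"
    moreover have "br k1 k2 \<in> den_ideal q" if "k1 \<in> I" "k2 \<in> I" for k1 k2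
      using Itilde_maps_den_ideal[OF Ii q ad_in_Itilde[OF that(1)]] that(2) lie_ideal_subset[OF Ii]
      by (auto simp: ad_def)
    ultimately show "a = 0" using essential_ann_brackets[OF I a] by blast
  qed
  have "\<alpha> x \<in> den_ideal q" using Itilde_maps_den_ideal[OF Ii q \<alpha>] x by blast
  moreover have "br (\<alpha> x) q \<noteq> 0" using nonzero by (simp add: bracket_eq_0_commute)
  ultimately show "\<exists>y\<in>den_ideal q. br y q \<noteq> 0" by blast
  show "\<forall>y\<in>den_ideal q. br y q \<in> L" by (simp add: den_ideal_def)
qed

end

section \<open>Algebras of quotients\<close>

locale quotient_extension = semiprime_extension scale br L
  for scale :: "'r::comm_ring_1 \<Rightarrow> 'q::ab_group_add \<Rightarrow> 'q" and br L +
  assumes is_quotient: "algebra_of_quotients scale br L"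
begin

lemma ex_essential_fractions: "\<exists>I. essential I \<and> q \<in> fractions I"
proof (cases "q = 0")
  case True
  then show ?thesis using essential_L subspace_0[OF subspace_fractions] by blast
next
  case False
  then obtain I where "essential I" "\<forall>x\<in>I. br x q \<in> L"
    using is_quotient unfolding algebra_of_quotients_def essential_def by blast
  then show ?thesis using bracket_mem_commute[OF subspace_L] by (auto simp: fractions_def)
qed

lemma ex_bracket_nonzero:
  assumes I: "essential I" and p: "p \<noteq> 0"
  shows "\<exists>x\<in>I. br x p \<noteq> 0"
proof (rule ccontr)
  assume "\<not> ?thesis"
  then have Ip: "br x p = 0" if "x \<in> I" for x using that by blast
  obtain J j where J: "lie_ideal scale br L J" and j: "j \<in> J" and jp: "br j p \<noteq> 0" "br j p \<in> L"
    using is_quotient p unfolding algebra_of_quotients_def by blast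
  have jL: "j \<in> L" using j lie_ideal_subset[OF J] by blast
  have "br j p = 0"
  proof (rule essential_ann_zero[OF I jp(2)])
    fix x assume x: "x \<in> I"
    have "br x j \<in> I" by (rule lie_ideal_bracket_right[OF essential_lie_ideal[OF I] jL x])
    then have "br x (br j p) = 0" using bracket_leibniz[of x j p] Ip[OF x] Ip by simp
    then show "br (br j p) x = 0" by (simp add: bracket_eq_0_commute)
  qed
  with jp show False by simp
qed

lemma center_eq_zero: "center br UNIV = {0}"
proof -
  have "a = 0" if "a \<in> center br UNIV" for a
    using that ex_bracket_nonzero[OF essential_L, of a]
    by (auto simp: center_def Ann_def bracket_eq_0_commute)
  then show ?thesis by (auto simp: center_def Ann_def)
qed

lemma ess_continuous_ad: "ess_continuous (ad br q)"
  unfolding ess_continuous_def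
proof (intro allI impI)
  fix J assume J: "essential J"
  obtain I0 where I0: "essential I0" "q \<in> fractions I0" using ex_essential_fractions by blast
  let ?K = "J \<inter> I0"
  have K: "essential ?K" by (rule essential_Int[OF J I0(1)])
  have Ki: "lie_ideal scale br L ?K" by (rule essential_lie_ideal[OF K])
  have q_derived: "br q ` derived ?K \<subseteq> ?K"
    by (rule bracket_derived_subset[OF Ki]) (use I0(2) in \<open>auto simp: fractions_def\<close>)
  have z_derived: "br z ` derived ?K \<subseteq> ?K" if "z \<in> fractions J" for z
    by (rule bracket_derived_subset[OF Ki]) (use that in \<open>auto simp: fractions_def\<close>)
  have "br q ` fractions J \<subseteq> fractions (derived ?K)"
  proof
    fix w assume "w \<in> br q ` fractions J"
    then obtain z where z: "z \<in> fractions J" and w: "w = br q z" by blast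
    have "br (br q z) x \<in> L" if x: "x \<in> derived ?K" for x
    proof -
      have "br q (br z x) \<in> L" using z_derived[OF z] x I0(2) by (auto simp: fractions_def)
      moreover have "br z (br q x) \<in> L" using q_derived x z by (auto simp: fractions_def)
      ultimately have "br q (br z x) - br z (br q x) \<in> L" by (rule subspace_diff[OF subspace_L])
      then show ?thesis by (simp add: bracket_leibniz[of q z x])
    qed
    then show "w \<in> fractions (derived ?K)" by (simp add: fractions_def w)
  qed
  then show "\<exists>I. essential I \<and> ad br q ` I \<subseteq> J \<and> ad br q ` fractions J \<subseteq> fractions I"
    using essential_derived[OF K] q_derived unfolding ad_def by (intro exI[of _ "derived ?K"]) auto
qed

lemma AQ_ess_continuous: "\<mu> \<in> AQ scale br \<Longrightarrow> ess_continuous \<mu>"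
  unfolding AQ_def
  by (induction rule: gen_alg.induct)
    (blast intro: ess_continuous_ad ess_continuous_zero ess_continuous_add ess_continuous_scale
      ess_continuous_comp)+

lemma ex_ad_bracket_nonzero:
  assumes I: "essential I" and q: "q \<noteq> 0"
  shows "\<exists>x\<in>I. \<exists>l\<in>L. br q (br x l) \<noteq> 0"
proof (rule ccontr)
  assume "\<not> ?thesis"
  then have vanish: "br q (br x l) = 0" if "x \<in> I" "l \<in> L" for x l using that by blast
  obtain J where J: "essential J" "q \<in> fractions J" using ex_essential_fractions by blast
  have K: "essential (I \<inter> J)" by (rule essential_Int[OF I J(1)])
  have KL: "I \<inter> J \<subseteq> L" by (rule lie_ideal_subset[OF essential_lie_ideal[OF K]])
  obtain x where x: "x \<in> I \<inter> J" and xq: "br x q \<noteq> 0" using ex_bracket_nonzero[OF K q] by blast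
  have qx: "br q x \<in> L" using x J(2) by (simp add: fractions_def)
  have "br q x = 0"
  proof (rule essential_ann_brackets[OF K qx])
    fix k1 k2 assume "k1 \<in> I \<inter> J" "k2 \<in> I \<inter> J"
    then have k: "k1 \<in> I" "br k1 k2 \<in> L" "k2 \<in> L" using KL bracket_closed by auto
    have "br q (br x (br k1 k2)) = 0" using vanish x k(2) by blast
    moreover have "br q (br k1 k2) = 0" using vanish k(1,3) by blast
    ultimately show "br (br q x) (br k1 k2) = 0" using bracket_leibniz[of q x "br k1 k2"] by simp
  qed
  then show False using xq by (simp add: bracket_eq_0_commute)
qed

lemma AQ_quotient_condition:
  assumes \<mu>: "\<mu> \<in> AQ scale br" and nonzero: "\<mu> \<noteq> (\<lambda>_. 0)"
  shows "\<exists>I. essential I \<and> quotient_condition \<mu> I"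
proof -
  obtain I where I: "essential I" "\<mu> ` I \<subseteq> L" "\<mu> ` fractions L \<subseteq> fractions I"
    using AQ_ess_continuous[OF \<mu>] essential_L unfolding ess_continuous_def by blast
  have Ii: "lie_ideal scale br L I" by (rule essential_lie_ideal[OF I(1)])
  have \<mu>L: "\<mu> ` L \<subseteq> fractions I" using I(3) L_subset_fractions[OF subset_refl] by blast
  obtain z where z: "\<mu> z \<noteq> 0" using nonzero by blast
  obtain x where x: "x \<in> I" "br x (\<mu> z) \<noteq> 0" using ex_bracket_nonzero[OF I(1) z] by blast
  have "ad br x \<circ> \<mu> \<noteq> (\<lambda>_. 0)" using x(2) by (auto simp: ad_def fun_eq_iff)
  moreover have "\<exists>\<alpha> \<in> Itilde scale br L I. \<exists>l \<in> L. \<mu> (\<alpha> l) \<noteq> 0" if \<mu>q: "\<mu> = ad br q" for q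
  proof -
    have "q \<noteq> 0" using nonzero \<mu>q by (auto simp: ad_def fun_eq_iff)
    then obtain y l where "y \<in> I" "l \<in> L" "br q (br y l) \<noteq> 0"
      using ex_ad_bracket_nonzero[OF I(1)] by blast
    then show ?thesis using ad_in_Itilde \<mu>q by (auto simp: ad_def)
  qed
  ultimately show ?thesis
    using I(1) comp_Itilde_in_A0[OF Ii \<mu> I(2)] Itilde_comp_in_A0[OF Ii \<mu> \<mu>L] ad_in_Itilde[OF x(1)]
    unfolding quotient_condition_def by blast
qed

end

theorem mainTheorem1:
  fixes scale :: "'r::comm_ring_1 \<Rightarrow> 'q::ab_group_add \<Rightarrow> 'q"
    and br :: "'q \<Rightarrow> 'q \<Rightarrow> 'q"
    and L :: "'q set"
  assumes "lie_algebra scale br"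
    and "lie_subalgebra scale br L"
    and "semiprime scale br L"
  shows "algebra_of_quotients scale br L \<longleftrightarrow>
    (center br UNIV = {0} \<and>
     (\<forall>\<mu> \<in> AQ scale br. \<mu> \<noteq> (\<lambda>_. 0) \<longrightarrow>
        (\<exists>I. lie_ideal scale br L I \<and> Ann br L I = {0}
           \<and> (\<forall>\<alpha> \<in> Itilde scale br L I. \<mu> \<circ> \<alpha> \<in> A0 scale br L)
           \<and> (\<forall>\<alpha> \<in> Itilde scale br L I. \<alpha> \<circ> \<mu> \<in> A0 scale br L)
           \<and> (\<exists>\<alpha> \<in> Itilde scale br L I. \<alpha> \<circ> \<mu> \<noteq> (\<lambda>_. 0))
           \<and> ((\<exists>q. \<mu> = ad br q) \<longrightarrow>
                (\<exists>\<alpha> \<in> Itilde scale br L I. \<exists>x \<in> L. \<mu> (\<alpha> x) \<noteq> 0)))))"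
proof -
  interpret semiprime_extension scale br L
    using assms by unfold_locales
  have "algebra_of_quotients scale br L \<longleftrightarrow> center br UNIV = {0} \<and>
      (\<forall>\<mu> \<in> AQ scale br. \<mu> \<noteq> (\<lambda>_. 0) \<longrightarrow> (\<exists>I. essential I \<and> quotient_condition \<mu> I))"
    (is "_ \<longleftrightarrow> ?condition")
  proof
    assume "algebra_of_quotients scale br L"
    then interpret quotient_extension scale br L by unfold_locales
    show ?condition using center_eq_zero AQ_quotient_condition by blast
  next
    assume condition: ?condition
    show "algebra_of_quotients scale br L"
      unfolding algebra_of_quotients_def
    proof (intro allI impI)
      fix q :: 'q assume "q \<noteq> 0"
      then have "ad br q \<noteq> (\<lambda>_. 0)" using condition ad_eq_zero_iff_center by blast
      then obtain I where "essential I" "quotient_condition (ad br q) I" using condition ad_in_AQ by blast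
      then show "\<exists>J. lie_ideal scale br L J \<and> Ann br L J = {0} \<and> (\<exists>x\<in>J. br x q \<noteq> 0) \<and> (\<forall>x\<in>J. br x q \<in> L)"
        using ex_denominator_ideal unfolding essential_def by blast
    qed
  qed
  then show ?thesis unfolding essential_def quotient_condition_def conj_assoc .
qed

end
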